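(* Let $\Phi$ be a Young function, $\varphi\in\mathcal{G}^{\rm dec}_1$, $n\ge2$, $k\in[2,n]\cap\mathbb{N}$ and $a_0,\dots,a_{k-1}>0$. Then, writing points of $\mathbb{R}^n$ as $(x_0,\dots,x_{n-1})$, \[ \bigl\|\chi_{\prod_{j=0}^{k-1}[0,a_j]\times\mathbb{R}^{n-k}}\bigr\|_{\mathcal{M}_\Phi^\varphi,\mathrm{cube}}=\sup_{R>0}\frac1{\varphi(R)}\Phi^{-1}\Bigl(\frac{R^k}{\prod_{j=0}^{k-1}\min(a_j,R)}\Bigr)^{-1}. \]
   Context: A Young function is a convex $\Phi:[0,\infty)\to[0,\infty)$ with $\Phi(0)=0$, $\lim_{t\to\infty}\Phi(t)=\infty$; its generalized inverse is $\Phi^{-1}(u)=\inf\{t\ge0:\Phi(t)>u\}$ for $u\in[0,\infty)$. $\mathcal{G}^{\rm dec}_1$ is the set of $\varphi:(0,\infty)\to(0,\infty)$ that are almost decreasing (there is $C>0$ with $C\varphi(r)\ge\varphi(s)$ for $r<s$) and submultiplicative ($\varphi(rs)\le C\varphi(r)\varphi(s)$). For $a\in\mathbb{R}^n$, $r>0$, $Q(a,r)=\{x:\max_i|x_i-a_i|\le r\}$ is the cube of side length $2r$; $\|f\|_{\Phi,Q}=\inf\{\lambda>0:\frac1{|Q|}\int_Q\Phi(|f|/\lambda)\le1\}$, and the cube version of the Orlicz–Morrey norm is $\|f\|_{\mathcal{M}_\Phi^\varphi,\mathrm{cube}}=\sup_{a\in\mathbb{R}^n,r>0}\frac1{\varphi(2r)}\|f\|_{\Phi,Q(a,r)}$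 (equivalent up to constants to the ball version $\sup_{a,r}\frac1{\varphi(r)}\|f\|_{\Phi,B(a,r)}$). $\chi_E$ is the characteristic function of $E$. *)

theory Defs
  imports "HOL-Analysis.Analysis"
begin

definition young_function :: "(real \<Rightarrow> real) \<Rightarrow> bool" where
  "young_function \<Phi> \<longleftrightarrow> convex_on {0..} \<Phi> \<and> (\<forall>t\<ge>0. \<Phi> t \<ge> 0) \<and> \<Phi> 0 = 0
     \<and> filterlim \<Phi> at_top at_top"

definition young_inv :: "(real \<Rightarrow> real) \<Rightarrow> real \<Rightarrow> real" where
  "young_inv \<Phi> u = Inf {t. t \<ge> 0 \<and> \<Phi> t > u}"

definition G_dec_1 :: "(real \<Rightarrow> real) \<Rightarrow> bool" where
  "G_dec_1 \<phi> \<longleftrightarrow> (\<forall>r>0. \<phi> r > 0)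
     \<and> (\<exists>C>0. \<forall>r s. 0 < r \<longrightarrow> r < s \<longrightarrow> \<phi> s \<le> C * \<phi> r)
     \<and> (\<exists>C>0. \<forall>r s. 0 < r \<longrightarrow> 0 < s \<longrightarrow> \<phi> (r * s) \<le> C * \<phi> r * \<phi> s)"

text \<open>Lebesgue measure on R^n, points are functions on {..<n}.\<close>
definition Rn :: "nat \<Rightarrow> (nat \<Rightarrow> real) measure" where
  "Rn n = PiM {..<n} (\<lambda>_. lborel)"

text \<open>Cube Q(a,r) of side length 2r.\<close>
definition cube :: "nat \<Rightarrow> (nat \<Rightarrow> real) \<Rightarrow> real \<Rightarrow> (nat \<Rightarrow> real) set" where
  "cube n a r = {x \<in> space (Rn n). \<forall>i<n. \<bar>x i - a i\<bar> \<le> r}"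

text \<open>Luxemburg--Orlicz average norm over Q (value +oo if no admissible lambda).\<close>
definition orlicz_norm ::
  "nat \<Rightarrow> (real \<Rightarrow> real) \<Rightarrow> ((nat \<Rightarrow> real) \<Rightarrow> real) \<Rightarrow> (nat \<Rightarrow> real) set \<Rightarrow> ereal" where
  "orlicz_norm n \<Phi> f Q = Inf (ereal ` {l. l > 0 \<and>
      ennreal (1 / measure (Rn n) Q) * (\<integral>\<^sup>+ x \<in> Q. ennreal (\<Phi> (\<bar>f x\<bar> / l)) \<partial>Rn n) \<le> 1})"

definition orlicz_morrey_cube ::
  "nat \<Rightarrow> (real \<Rightarrow> real) \<Rightarrow> (real \<Rightarrow> real) \<Rightarrow> ((nat \<Rightarrow> real) \<Rightarrow> real) \<Rightarrow> ereal" where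
  "orlicz_morrey_cube n \<Phi> \<phi> f =
     (SUP ar \<in> {(a, r). r > (0::real)}. orlicz_norm n \<Phi> f (cube n (fst ar) (snd ar)) / ereal (\<phi> (2 * snd ar)))"

end

theory Submission
  imports Defs
begin

text \<open>
  On a cube \<open>Q\<close>, the Luxemburg average norm of an indicator \<open>\<chi>\<^sub>E\<close> depends only on
  the proportion \<open>t = |E \<inter> Q| / |Q|\<close> and equals \<open>1 / \<Phi>\<inverse>(1/t)\<close>, which is
  increasing in \<open>t\<close>. For the slab \<open>E = \<Prod>\<^sub>j\<^sub><\<^sub>k [0,a\<^sub>j] \<times> \<real>\<^sup>n\<^sup>-\<^sup>k\<close> and a cube of side
  \<open>R\<close>, every coordinate \<open>j < k\<close> contributes a factor at most \<open>min(a\<^sub>j, R)/R\<close>, with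
  equality for the cube centred at \<open>(a\<^sub>0/2, \<dots>, a\<^sub>n\<^sub>-\<^sub>1/2)\<close>. Hence the supremum over
  all cubes of side \<open>R\<close> is attained at the centred one.
\<close>

lemma young_function_scale_le:
  assumes "young_function \<Phi>" "0 \<le> s" "s \<le> 1" "0 \<le> t"
  shows "\<Phi> (s * t) \<le> s * \<Phi> t"
proof -
  have cv: "convex_on {0..} \<Phi>" and "\<Phi> 0 = 0"
    using assms(1) unfolding young_function_def by auto
  have "\<Phi> ((1 - s) *\<^sub>R 0 + s *\<^sub>R t) \<le> (1 - s) * \<Phi> 0 + s * \<Phi> t"
    using assms by (intro convex_onD[OF cv]) auto
  with \<open>\<Phi> 0 = 0\<close> show ?thesis by simp
qed

lemma young_function_mono:
  assumes "young_function \<Phi>" "0 \<le> x" "x \<le> y"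
  shows "\<Phi> x \<le> \<Phi> y"
proof (cases "y = 0")
  case True
  with assms show ?thesis by simp
next
  case False
  with assms have y: "y > 0" by simp
  have "\<Phi> x = \<Phi> ((x / y) * y)" using y by simp
  also have "\<dots> \<le> (x / y) * \<Phi> y"
    using assms y by (intro young_function_scale_le) auto
  also have "\<dots> \<le> \<Phi> y"
    using assms y by (intro mult_left_le_one_le) (auto simp: young_function_def)
  finally show ?thesis .
qed

lemma young_function_continuous_on: "young_function \<Phi> \<Longrightarrow> continuous_on {0<..} \<Phi>"
  unfolding young_function_def by (intro convex_on_continuous) (auto intro: convex_on_subset)

lemma young_inv_set_nonempty:
  assumes "young_function \<Phi>"
  shows "{t. t \<ge> 0 \<and> \<Phi> t > u} \<noteq> {}"
proof -
  have "filterlim \<Phi> at_top at_top" using assms unfolding young_function_def by auto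
  hence "eventually (\<lambda>t. \<Phi> t > u) at_top" by (simp add: filterlim_at_top_dense)
  then obtain N where "\<And>t. t \<ge> N \<Longrightarrow> \<Phi> t > u" by (auto simp: eventually_at_top_linorder)
  hence "max N 0 \<in> {t. t \<ge> 0 \<and> \<Phi> t > u}" by auto
  thus ?thesis by blast
qed

lemma young_inv_ge:
  assumes "young_function \<Phi>" "0 \<le> s" "\<Phi> s \<le> u"
  shows "s \<le> young_inv \<Phi> u"
  unfolding young_inv_def
proof (rule cInf_greatest[OF young_inv_set_nonempty[OF assms(1)]])
  fix t assume "t \<in> {t. t \<ge> 0 \<and> \<Phi> t > u}"
  thus "s \<le> t" using young_function_mono[OF assms(1), of t s] assms(2,3) by force
qed

lemma young_inv_less:
  assumes Y: "young_function \<Phi>" and "0 < s" "u < \<Phi> s"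
  shows "young_inv \<Phi> u < s"
proof -
  have "isCont \<Phi> s"
    using young_function_continuous_on[OF Y] \<open>0 < s\<close> by (simp add: continuous_on_eq_continuous_at)
  hence "(\<Phi> \<longlongrightarrow> \<Phi> s) (at_left s)" by (simp add: isCont_def filterlim_at_split)
  hence "eventually (\<lambda>x. u < \<Phi> x) (at_left s)" using \<open>u < \<Phi> s\<close> by (rule order_tendstoD)
  then obtain b where b: "b < s" "\<And>y. b < y \<Longrightarrow> y < s \<Longrightarrow> u < \<Phi> y"
    by (auto simp: eventually_at_left_field)
  define y where "y = (max b 0 + s) / 2"
  have "0 \<le> y" "b < y" "y < s" using b \<open>0 < s\<close> unfolding y_def by auto
  hence "young_inv \<Phi> u \<le> y"
    unfolding young_inv_def using b by (intro cInf_lower bdd_belowI[of _ 0]) auto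
  with \<open>y < s\<close> show ?thesis by simp
qed

lemma le_young_inv_iff:
  assumes "young_function \<Phi>" "0 < s"
  shows "s \<le> young_inv \<Phi> u \<longleftrightarrow> \<Phi> s \<le> u"
  using young_inv_ge[OF assms(1), of s u] young_inv_less[OF assms(1,2), of u] assms(2) by force

lemma young_inv_pos:
  assumes Y: "young_function \<Phi>" and "0 < u"
  shows "0 < young_inv \<Phi> u"
proof -
  define s where "s = min 1 (u / (\<Phi> 1 + 1))"
  have \<Phi>1: "\<Phi> 1 \<ge> 0" using Y unfolding young_function_def by auto
  have s: "0 < s" "s \<le> 1" using \<open>0 < u\<close> \<Phi>1 unfolding s_def by auto
  have "\<Phi> s \<le> s * \<Phi> 1" using young_function_scale_le[OF Y, of s 1] s by simp
  also have "\<dots> \<le> u / (\<Phi> 1 + 1) * \<Phi> 1" using \<Phi>1 unfolding s_def by (intro mult_right_mono) auto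
  also have "\<dots> \<le> u" using \<Phi>1 \<open>0 < u\<close> by (simp add: field_simps)
  finally have "s \<le> young_inv \<Phi> u" using young_inv_ge[OF Y] s by simp
  with s show ?thesis by simp
qed

text \<open>The value of \<open>orlicz_norm\<close> on an indicator that occupies the proportion \<open>t\<close> of the cube.\<close>
definition orlicz_indicator_norm :: "(real \<Rightarrow> real) \<Rightarrow> real \<Rightarrow> ereal" where
  "orlicz_indicator_norm \<Phi> t = Inf (ereal ` {l. l > 0 \<and> \<Phi> (1 / l) * t \<le> 1})"

lemma orlicz_indicator_norm_mono:
  assumes Y: "young_function \<Phi>" and "0 \<le> t" "t \<le> t'"
  shows "orlicz_indicator_norm \<Phi> t \<le> orlicz_indicator_norm \<Phi> t'"
  unfolding orlicz_indicator_norm_def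
proof (intro Inf_superset_mono image_mono subsetI)
  fix l assume "l \<in> {l. l > 0 \<and> \<Phi> (1 / l) * t' \<le> 1}"
  hence l: "l > 0" "\<Phi> (1 / l) * t' \<le> 1" by auto
  have "\<Phi> (1 / l) \<ge> 0" using Y l unfolding young_function_def by auto
  hence "\<Phi> (1 / l) * t \<le> \<Phi> (1 / l) * t'" using assms by (intro mult_left_mono)
  with l show "l \<in> {l. l > 0 \<and> \<Phi> (1 / l) * t \<le> 1}" by auto
qed

lemma orlicz_indicator_norm_eq:
  assumes Y: "young_function \<Phi>" and "t > 0"
  shows "orlicz_indicator_norm \<Phi> t = ereal (inverse (young_inv \<Phi> (1 / t)))"
proof -
  define s where "s = young_inv \<Phi> (1 / t)"
  have s: "s > 0" using young_inv_pos[OF Y] \<open>t > 0\<close> unfolding s_def by simp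
  have "l > 0 \<and> \<Phi> (1 / l) * t \<le> 1 \<longleftrightarrow> 1 / s \<le> l" for l
  proof (cases "l > 0")
    case True
    have "\<Phi> (1 / l) * t \<le> 1 \<longleftrightarrow> \<Phi> (1 / l) \<le> 1 / t" using \<open>t > 0\<close> by (simp add: field_simps)
    also have "\<dots> \<longleftrightarrow> 1 / l \<le> s" unfolding s_def using le_young_inv_iff[OF Y] True by simp
    also have "\<dots> \<longleftrightarrow> 1 / s \<le> l" using True s by (simp add: field_simps)
    finally show ?thesis using True by simp
  next
    case False
    moreover have "1 / s > 0" using s by simp
    ultimately show ?thesis by linarith
  qed
  hence "{l. l > 0 \<and> \<Phi> (1 / l) * t \<le> 1} = {1 / s..}" by auto
  hence "orlicz_indicator_norm \<Phi> t = Inf (ereal ` {1 / s..})" unfolding orlicz_indicator_norm_def by simp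
  also have "\<dots> = ereal (1 / s)" by (intro antisym Inf_lower Inf_greatest) auto
  finally show ?thesis unfolding s_def by (simp add: divide_inverse)
qed

lemma orlicz_norm_indicator:
  assumes Y: "young_function \<Phi>"
    and meas: "E \<inter> Q \<in> sets (Rn n)" and fin: "emeasure (Rn n) (E \<inter> Q) \<noteq> \<infinity>"
  shows "orlicz_norm n \<Phi> (indicator E) Q
       = orlicz_indicator_norm \<Phi> (measure (Rn n) (E \<inter> Q) / measure (Rn n) Q)"
proof -
  have "\<Phi> 0 = 0" and \<Phi>_nonneg: "\<And>t. t \<ge> 0 \<Longrightarrow> \<Phi> t \<ge> 0"
    using Y unfolding young_function_def by auto
  have avg: "ennreal (1 / measure (Rn n) Q) * (\<integral>\<^sup>+ x \<in> Q. ennreal (\<Phi> (\<bar>indicator E x\<bar> / l)) \<partial>Rn n)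
      = ennreal (\<Phi> (1 / l) * (measure (Rn n) (E \<inter> Q) / measure (Rn n) Q))" if "l > 0" for l
  proof -
    have "(\<integral>\<^sup>+ x \<in> Q. ennreal (\<Phi> (\<bar>indicator E x\<bar> / l)) \<partial>Rn n)
        = (\<integral>\<^sup>+ x. ennreal (\<Phi> (1 / l)) * indicator (E \<inter> Q) x \<partial>Rn n)"
      by (intro nn_integral_cong) (auto simp: indicator_def \<open>\<Phi> 0 = 0\<close>)
    also have "\<dots> = ennreal (\<Phi> (1 / l)) * ennreal (measure (Rn n) (E \<inter> Q))"
      using meas fin by (simp add: nn_integral_cmult_indicator emeasure_eq_ennreal_measure)
    finally show ?thesis
      using \<Phi>_nonneg[of "1 / l"] \<open>l > 0\<close> by (simp add: ennreal_mult[symmetric] mult_ac)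
  qed
  show ?thesis
    unfolding orlicz_norm_def orlicz_indicator_norm_def
    by (rule arg_cong[where f = "\<lambda>S. Inf (ereal ` S)"]) (use avg in auto)
qed

lemma space_Rn: "space (Rn n) = PiE {..<n} (\<lambda>_. UNIV)"
  unfolding Rn_def by (simp add: space_PiM)

lemma sets_Rn_box: "PiE {..<n} (\<lambda>i. {l i..u i}) \<in> sets (Rn n)"
  unfolding Rn_def by (rule sets_PiM_I_finite) auto

lemma emeasure_Rn_box:
  "emeasure (Rn n) (PiE {..<n} (\<lambda>i. {l i..u i})) = ennreal (\<Prod>i<n. max 0 (u i - l i))"
proof -
  interpret product_sigma_finite "\<lambda>_. lborel" by standard
  have "emeasure (Rn n) (PiE {..<n} (\<lambda>i. {l i..u i})) = (\<Prod>i<n. emeasure lborel {l i..u i})"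
    unfolding Rn_def by (rule emeasure_PiM) auto
  also have "\<dots> = (\<Prod>i<n. ennreal (max 0 (u i - l i)))"
    by (intro prod.cong) (auto simp: emeasure_lborel_Icc_eq)
  also have "\<dots> = ennreal (\<Prod>i<n. max 0 (u i - l i))"
    by (intro prod_ennreal) auto
  finally show ?thesis .
qed

lemma measure_Rn_box:
  "measure (Rn n) (PiE {..<n} (\<lambda>i. {l i..u i})) = (\<Prod>i<n. max 0 (u i - l i))"
  unfolding measure_def emeasure_Rn_box by (simp add: prod_nonneg)

lemma cube_eq_box: "cube n c r = PiE {..<n} (\<lambda>i. {c i - r..c i + r})"
  unfolding cube_def space_Rn by (auto simp: PiE_def Pi_def extensional_def abs_le_iff)

lemma measure_cube: "r \<ge> 0 \<Longrightarrow> measure (Rn n) (cube n c r) = (2 * r) ^ n"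
  unfolding cube_eq_box measure_Rn_box by simp

definition slab :: "nat \<Rightarrow> nat \<Rightarrow> (nat \<Rightarrow> real) \<Rightarrow> (nat \<Rightarrow> real) set" where
  "slab n k a = {x \<in> space (Rn n). \<forall>j<k. 0 \<le> x j \<and> x j \<le> a j}"

lemma slab_Int_cube:
  assumes "k \<le> n"
  shows "slab n k a \<inter> cube n c r = PiE {..<n} (\<lambda>i.
     {if i < k then max (c i - r) 0 else c i - r .. if i < k then min (c i + r) (a i) else c i + r})"
  using assms unfolding slab_def cube_eq_box space_Rn
  by (auto simp: PiE_def Pi_def extensional_def split: if_splits)

lemma sets_slab_Int_cube: "k \<le> n \<Longrightarrow> slab n k a \<inter> cube n c r \<in> sets (Rn n)"
  unfolding slab_Int_cube by (rule sets_Rn_box)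

lemma emeasure_slab_Int_cube_finite: "k \<le> n \<Longrightarrow> emeasure (Rn n) (slab n k a \<inter> cube n c r) \<noteq> \<infinity>"
  unfolding slab_Int_cube emeasure_Rn_box by simp

lemma measure_slab_Int_cube:
  assumes "k \<le> n" "r \<ge> 0"
  shows "measure (Rn n) (slab n k a \<inter> cube n c r)
       = (\<Prod>i<n. if i < k then max 0 (min (c i + r) (a i) - max (c i - r) 0) else 2 * r)"
  unfolding slab_Int_cube[OF assms(1)] measure_Rn_box using assms(2)
  by (intro prod.cong) auto

lemma prod_split_at:
  fixes f :: "nat \<Rightarrow> 'a::comm_monoid_mult"
  assumes "k \<le> n"
  shows "(\<Prod>i<n. if i < k then f i else x) = (\<Prod>j<k. f j) * x ^ (n - k)"
proof -
  define g where "g i = (if i < k then f i else x)" for i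
  have "(\<Prod>i\<in>{0..<k}. g i) * (\<Prod>i\<in>{k..<n}. g i) = (\<Prod>i\<in>{0..<n}. g i)"
    using assms by (intro prod.atLeastLessThan_concat) auto
  moreover have "(\<Prod>i\<in>{0..<k}. g i) = (\<Prod>j<k. f j)"
    unfolding g_def atLeast0LessThan by simp
  moreover have "(\<Prod>i\<in>{k..<n}. g i) = x ^ (n - k)"
    unfolding g_def by simp
  ultimately have "(\<Prod>i<n. g i) = (\<Prod>j<k. f j) * x ^ (n - k)"
    by (simp add: atLeast0LessThan)
  thus ?thesis unfolding g_def .
qed

lemma measure_cube_split:
  assumes "k \<le> n" "r \<ge> 0"
  shows "measure (Rn n) (cube n c r) = (2 * r) ^ k * (2 * r) ^ (n - k)"
proof -
  have "(2 * r) ^ n = (2 * r) ^ (k + (n - k))" using assms(1) by simp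
  thus ?thesis using assms(2) by (simp only: measure_cube power_add)
qed

lemma slab_density_le:
  assumes "k \<le> n" "r > 0" "\<forall>j<k. a j > 0"
  shows "measure (Rn n) (slab n k a \<inter> cube n c r) / measure (Rn n) (cube n c r)
       \<le> (\<Prod>j<k. min (a j) (2 * r)) / (2 * r) ^ k"
proof -
  have "measure (Rn n) (slab n k a \<inter> cube n c r) \<le> (\<Prod>i<n. if i < k then min (a i) (2 * r) else 2 * r)"
    unfolding measure_slab_Int_cube[OF assms(1) less_imp_le[OF assms(2)]]
    using assms(2,3) by (intro prod_mono) (auto simp: max_def min_def)
  also have "\<dots> = (\<Prod>j<k. min (a j) (2 * r)) * (2 * r) ^ (n - k)"
    using prod_split_at[OF assms(1)] .
  finally have "measure (Rn n) (slab n k a \<inter> cube n c r) / measure (Rn n) (cube n c r)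
      \<le> (\<Prod>j<k. min (a j) (2 * r)) * (2 * r) ^ (n - k) / ((2 * r) ^ k * (2 * r) ^ (n - k))"
    unfolding measure_cube_split[OF assms(1) less_imp_le[OF assms(2)]]
    using assms(2) by (intro divide_right_mono) auto
  also have "\<dots> = (\<Prod>j<k. min (a j) (2 * r)) / (2 * r) ^ k"
    using assms(2) by simp
  finally show ?thesis .
qed

lemma slab_density_centred:
  assumes "k \<le> n" "R > 0" "\<forall>j<k. a j > 0"
  shows "measure (Rn n) (slab n k a \<inter> cube n (\<lambda>i. a i / 2) (R / 2))
           / measure (Rn n) (cube n (\<lambda>i. a i / 2) (R / 2))
       = (\<Prod>j<k. min (a j) R) / R ^ k"
proof -
  have "R / 2 \<ge> 0" using assms(2) by simp
  have "measure (Rn n) (slab n k a \<inter> cube n (\<lambda>i. a i / 2) (R / 2))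
      = (\<Prod>i<n. if i < k then min (a i) R else R)"
    unfolding measure_slab_Int_cube[OF assms(1) \<open>R / 2 \<ge> 0\<close>] using assms(2,3)
    by (intro prod.cong) (auto simp: max_def min_def)
  also have "\<dots> = (\<Prod>j<k. min (a j) R) * R ^ (n - k)"
    using prod_split_at[OF assms(1)] .
  finally show ?thesis
    unfolding measure_cube_split[OF assms(1) \<open>R / 2 \<ge> 0\<close>] using assms(2) by simp
qed

lemma orlicz_norm_slab_cube_le:
  assumes "young_function \<Phi>" "k \<le> n" "r > 0" "\<forall>j<k. a j > 0"
  shows "orlicz_norm n \<Phi> (indicator (slab n k a)) (cube n c r)
       \<le> orlicz_indicator_norm \<Phi> ((\<Prod>j<k. min (a j) (2 * r)) / (2 * r) ^ k)"
  unfolding orlicz_norm_indicator[OF assms(1) sets_slab_Int_cube[OF assms(2)]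
      emeasure_slab_Int_cube_finite[OF assms(2)]]
  by (intro orlicz_indicator_norm_mono[OF assms(1)] slab_density_le[OF assms(2-4)])
    (simp add: measure_nonneg)

lemma orlicz_norm_slab_centred_cube:
  assumes "young_function \<Phi>" "k \<le> n" "R > 0" "\<forall>j<k. a j > 0"
  shows "orlicz_norm n \<Phi> (indicator (slab n k a)) (cube n (\<lambda>i. a i / 2) (R / 2))
       = orlicz_indicator_norm \<Phi> ((\<Prod>j<k. min (a j) R) / R ^ k)"
  unfolding orlicz_norm_indicator[OF assms(1) sets_slab_Int_cube[OF assms(2)]
      emeasure_slab_Int_cube_finite[OF assms(2)]]
    slab_density_centred[OF assms(2-4)] ..

lemma orlicz_morrey_cube_eq_SUP_side:
  assumes le: "\<And>c r. r > 0 \<Longrightarrow> orlicz_norm n \<Phi> f (cube n c r) \<le> G (2 * r)"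
    and eq: "\<And>R. R > 0 \<Longrightarrow> orlicz_norm n \<Phi> f (cube n (c R) (R / 2)) = G R"
    and \<phi>_pos: "\<And>R. R > 0 \<Longrightarrow> \<phi> R > 0"
  shows "orlicz_morrey_cube n \<Phi> \<phi> f = (SUP R \<in> {0<..}. G R / ereal (\<phi> R))"
proof -
  define M where "M c' r = orlicz_norm n \<Phi> f (cube n c' r) / ereal (\<phi> (2 * r))" for c' r
  have "(SUP ar \<in> {(c', r). r > 0}. M (fst ar) (snd ar)) = (SUP R \<in> {0<..}. G R / ereal (\<phi> R))"
  proof (rule antisym)
    show "(SUP ar \<in> {(c', r). r > 0}. M (fst ar) (snd ar)) \<le> (SUP R \<in> {0<..}. G R / ereal (\<phi> R))"
    proof (rule SUP_least, clarify)
      fix c' and r :: real assume "r > 0"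
      hence "M c' r \<le> G (2 * r) / ereal (\<phi> (2 * r))"
        unfolding M_def using le \<phi>_pos[of "2 * r"] by simp
      also have "\<dots> \<le> (SUP R \<in> {0<..}. G R / ereal (\<phi> R))" using \<open>r > 0\<close> by (intro SUP_upper) auto
      finally show "M (fst (c', r)) (snd (c', r)) \<le> (SUP R \<in> {0<..}. G R / ereal (\<phi> R))" by simp
    qed
    show "(SUP R \<in> {0<..}. G R / ereal (\<phi> R)) \<le> (SUP ar \<in> {(c', r). r > 0}. M (fst ar) (snd ar))"
    proof (rule SUP_least)
      fix R :: real assume "R \<in> {0<..}"
      hence "G R / ereal (\<phi> R) = M (fst (c R, R / 2)) (snd (c R, R / 2))"
        unfolding M_def using eq by simp
      also have "\<dots> \<le> (SUP ar \<in> {(c', r). r > 0}. M (fst ar) (snd ar))"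
        using \<open>R \<in> {0<..}\<close> by (intro SUP_upper) auto
      finally show "G R / ereal (\<phi> R) \<le> (SUP ar \<in> {(c', r). r > 0}. M (fst ar) (snd ar))" .
    qed
  qed
  thus ?thesis unfolding orlicz_morrey_cube_def M_def .
qed

theorem lemma4p13:
  fixes \<Phi> \<phi> :: "real \<Rightarrow> real" and n k :: nat and a :: "nat \<Rightarrow> real"
  assumes "young_function \<Phi>" and "G_dec_1 \<phi>" and "n \<ge> 2"
    and "2 \<le> k" and "k \<le> n" and "\<forall>j<k. a j > 0"
  shows "orlicz_morrey_cube n \<Phi> \<phi>
           (indicator {x \<in> space (Rn n). \<forall>j<k. 0 \<le> x j \<and> x j \<le> a j})
       = (SUP R \<in> {0<..}. ereal (1 / \<phi> R * inverse (young_inv \<Phi> (R ^ k / (\<Prod>j<k. min (a j) R)))))"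
proof -
  note Y = assms(1) and kn = assms(5) and a = assms(6)
  have \<phi>_pos: "\<And>R. R > 0 \<Longrightarrow> \<phi> R > 0" using assms(2) unfolding G_dec_1_def by auto
  have "orlicz_morrey_cube n \<Phi> \<phi> (indicator (slab n k a))
      = (SUP R \<in> {0<..}. orlicz_indicator_norm \<Phi> ((\<Prod>j<k. min (a j) R) / R ^ k) / ereal (\<phi> R))"
    using orlicz_norm_slab_cube_le[OF Y kn _ a] orlicz_norm_slab_centred_cube[OF Y kn _ a] \<phi>_pos
    by (intro orlicz_morrey_cube_eq_SUP_side) auto
  also have "\<dots> = (SUP R \<in> {0<..}. ereal (1 / \<phi> R * inverse (young_inv \<Phi> (R ^ k / (\<Prod>j<k. min (a j) R)))))"
  proof (intro SUP_cong refl)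
    fix R :: real assume "R \<in> {0<..}"
    hence "R > 0" by simp
    have "0 < (\<Prod>j<k. min (a j) R) / R ^ k" using a \<open>R > 0\<close> by (intro divide_pos_pos prod_pos) auto
    thus "orlicz_indicator_norm \<Phi> ((\<Prod>j<k. min (a j) R) / R ^ k) / ereal (\<phi> R)
        = ereal (1 / \<phi> R * inverse (young_inv \<Phi> (R ^ k / (\<Prod>j<k. min (a j) R))))"
      using orlicz_indicator_norm_eq[OF Y] \<phi>_pos[OF \<open>R > 0\<close>] by simp
  qed
  finally show ?thesis unfolding slab_def .
qed

end
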